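(* There exist absolute constants $0<c\le C$ such that the following holds. Let $d\ge 1$, $n\ge3$, $m\ge1$ be integers and $0<r\le 1/(2d)$, let $\mathcal{L}$ be the FTCS operator with parameter $r$, and let $A$ be the $mn^d\times mn^d$ block matrix consisting of $m\times m$ blocks of size $n^d\times n^d$, with identity blocks $I$ on the block diagonal, blocks $-\mathcal{L}$ on the block sub-diagonal, and zero blocks elsewhere. Then $c\le\|A\|\le C$ and $c\,m\le\|A^{-1}\|\le C\,m$. In particular the condition number $\|A\|\|A^{-1}\|$ of $A$ is $\Theta(m)$.
   Context: The FTCS operator with parameter $r$ on $\mathbb{R}^{\mathbb{Z}_n^d}$ is $\mathcal{L}=I_n^{\otimes d}+r\sum_{j=1}^d I_n^{\otimes(j-1)}\otimes H\otimes I_n^{\otimes(d-j)}$, where $H$ is the $n\times n$ circulant matrix with $-2$ on the diagonal, $1$ on the super- and sub-diagonal, and $1$ in the corner entries $(1,n)$ and $(n,1)$; equivalently $(\mathcal{L}v)(\mathbf{k})=(1-2dr)v(\mathbf{k})+r\sum_{i=1}^d(v(\mathbf{k}+\mathbf{e}_i)+v(\mathbf{k}-\mathbf{e}_i))$ with indices mod $n$. $\|\cdot\|$ denotes the operator (spectral) norm. *)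

theory Defs
  imports Complex_Main
begin

text \<open>The discrete torus Z_n^d, represented as index functions k :: nat => nat with
  k i < n for i < d and k i = 0 for i >= d.\<close>
definition grid :: "nat \<Rightarrow> nat \<Rightarrow> (nat \<Rightarrow> nat) set" where
  "grid d n = {k. (\<forall>i<d. k i < n) \<and> (\<forall>i\<ge>d. k i = 0)}"

definition FTCS :: "nat \<Rightarrow> nat \<Rightarrow> real \<Rightarrow> ((nat \<Rightarrow> nat) \<Rightarrow> real) \<Rightarrow> (nat \<Rightarrow> nat) \<Rightarrow> real" where
  "FTCS d n r v k = (1 - 2 * real d * r) * v k
     + r * (\<Sum>i<d. v (k(i := (k i + 1) mod n)) + v (k(i := (k i + n - 1) mod n)))"

definition blockidx :: "nat \<Rightarrow> nat \<Rightarrow> nat \<Rightarrow> (nat \<times> (nat \<Rightarrow> nat)) set" where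
  "blockidx m d n = {..<m} \<times> grid d n"

definition blockA :: "nat \<Rightarrow> nat \<Rightarrow> real \<Rightarrow>
    (nat \<times> (nat \<Rightarrow> nat) \<Rightarrow> real) \<Rightarrow> nat \<times> (nat \<Rightarrow> nat) \<Rightarrow> real" where
  "blockA d n r x p = x p - (if fst p > 0 then FTCS d n r (\<lambda>k. x (fst p - 1, k)) (snd p) else 0)"

text \<open>Vectors in R^S: real functions vanishing outside the finite index set S.\<close>
definition vecs :: "'a set \<Rightarrow> ('a \<Rightarrow> real) set" where
  "vecs S = {x. \<forall>p. p \<notin> S \<longrightarrow> x p = 0}"

definition vnorm :: "'a set \<Rightarrow> ('a \<Rightarrow> real) \<Rightarrow> real" where
  "vnorm S x = sqrt (\<Sum>p\<in>S. (x p)^2)"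

definition restr :: "'a set \<Rightarrow> ('a \<Rightarrow> real) \<Rightarrow> 'a \<Rightarrow> real" where
  "restr S x p = (if p \<in> S then x p else 0)"

definition opnorm :: "'a set \<Rightarrow> (('a \<Rightarrow> real) \<Rightarrow> ('a \<Rightarrow> real)) \<Rightarrow> real" where
  "opnorm S T = Sup ((\<lambda>x. vnorm S (T x) / vnorm S x) ` {x \<in> vecs S. x \<noteq> (\<lambda>_. 0)})"

definition invertible_on :: "'a set \<Rightarrow> (('a \<Rightarrow> real) \<Rightarrow> ('a \<Rightarrow> real)) \<Rightarrow> bool" where
  "invertible_on S T = (\<forall>y\<in>vecs S. \<exists>!x. x \<in> vecs S \<and> restr S (T x) = y)"

definition inv_on :: "'a set \<Rightarrow> (('a \<Rightarrow> real) \<Rightarrow> ('a \<Rightarrow> real)) \<Rightarrow> ('a \<Rightarrow> real) \<Rightarrow> 'a \<Rightarrow> real" where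
  "inv_on S T y = (THE x. x \<in> vecs S \<and> restr S (T x) = restr S y)"

end

theory Submission
  imports Defs "HOL-Analysis.L2_Norm" "HOL-Analysis.Convex"
begin

text \<open>For 2dr \<le> 1 the FTCS operator L is a convex combination of translations of the torus,
  hence a contraction in the Euclidean norm. Writing A = I - N with N the block shift followed by L
  gives \<parallel>A\<parallel> \<le> 1 + \<parallel>N\<parallel> \<le> 2, while a vector supported on the last block is fixed by A, so \<parallel>A\<parallel> \<ge> 1.
  A is inverted by forward substitution x_j = y_j + L x_{j-1}; since L is a contraction,
  \<parallel>x_j\<parallel> \<le> \<parallel>y_0\<parallel> + ... + \<parallel>y_j\<parallel>, and Cauchy-Schwarz yields \<parallel>A^{-1}\<parallel> \<le> m. For the all-ones
  right-hand side x_j is the constant j + 1 (L fixes constants), and \<Sum>(j+1)^2 \<ge> m^3/3 yields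
  \<parallel>A^{-1}\<parallel> \<ge> m/\<surd>3.\<close>

lemma finite_grid: "finite (grid d n)"
proof -
  let ?lists = "{xs. set xs \<subseteq> {..<n} \<and> length xs = d}"
  have "grid d n \<subseteq> (\<lambda>xs i. if i < d then xs ! i else 0) ` ?lists"
  proof
    fix k assume k: "k \<in> grid d n"
    then have "k = (\<lambda>i. if i < d then map k [0..<d] ! i else 0)"
      by (auto simp: grid_def fun_eq_iff)
    moreover have "map k [0..<d] \<in> ?lists" using k by (auto simp: grid_def)
    ultimately show "k \<in> (\<lambda>xs i. if i < d then xs ! i else 0) ` ?lists" by blast
  qed
  then show ?thesis by (rule finite_subset) (auto intro: finite_lists_length_eq)
qed

lemma zero_in_grid: "0 < n \<Longrightarrow> (\<lambda>_. 0) \<in> grid d n"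
  by (simp add: grid_def)

lemma fun_upd_in_grid: "k \<in> grid d n \<Longrightarrow> i < d \<Longrightarrow> a < n \<Longrightarrow> k(i := a) \<in> grid d n"
  by (simp add: grid_def)

lemma bij_betw_grid_update:
  assumes f: "bij_betw f {..<n} {..<n}" and i: "i < d"
  shows "bij_betw (\<lambda>k. k(i := f (k i))) (grid d n) (grid d n)"
proof (rule bij_betwI[where g = "\<lambda>k. k(i := inv_into {..<n} f (k i))"])
  have ki: "k i \<in> {..<n}" if "k \<in> grid d n" for k
    using that i by (simp add: grid_def)
  have f_inv: "bij_betw (inv_into {..<n} f) {..<n} {..<n}"
    using f by (rule bij_betw_inv_into)
  show "(\<lambda>k. k(i := f (k i))) \<in> grid d n \<rightarrow> grid d n"
    using ki bij_betw_apply[OF f] i by (auto intro!: fun_upd_in_grid)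
  show "(\<lambda>k. k(i := inv_into {..<n} f (k i))) \<in> grid d n \<rightarrow> grid d n"
    using ki bij_betw_apply[OF f_inv] i by (auto intro!: fun_upd_in_grid)
  show "(k(i := f (k i)))(i := inv_into {..<n} f ((k(i := f (k i))) i)) = k" if "k \<in> grid d n" for k
    using bij_betw_inv_into_left[OF f ki[OF that]] by simp
  show "(k(i := inv_into {..<n} f (k i)))(i := f ((k(i := inv_into {..<n} f (k i))) i)) = k"
    if "k \<in> grid d n" for k
    using bij_betw_inv_into_right[OF f ki[OF that]] by simp
qed

lemma mod_pred_mod_succ: "(a::nat) < n \<Longrightarrow> ((a + 1) mod n + n - 1) mod n = a"
  by (cases "a + 1 = n") auto

lemma mod_succ_mod_pred: "(a::nat) < n \<Longrightarrow> ((a + n - 1) mod n + 1) mod n = a"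
  by (cases a) (auto simp: mod_if)

lemma bij_betw_mod_succ: "0 < n \<Longrightarrow> bij_betw (\<lambda>a. (a + 1) mod n) {..<n} {..<(n::nat)}"
  by (rule bij_betwI[where g = "\<lambda>a. (a + n - 1) mod n"])
    (auto intro: mod_pred_mod_succ mod_succ_mod_pred simp del: One_nat_def Suc_eq_plus1)

lemma bij_betw_mod_pred: "0 < n \<Longrightarrow> bij_betw (\<lambda>a. (a + n - 1) mod n) {..<n} {..<(n::nat)}"
  by (rule bij_betwI[where g = "\<lambda>a. (a + 1) mod n"])
    (auto intro: mod_pred_mod_succ mod_succ_mod_pred simp del: One_nat_def Suc_eq_plus1)

lemma sum_grid_update:
  assumes "bij_betw f {..<n} {..<n}" "i < d"
  shows "(\<Sum>k\<in>grid d n. g (k(i := f (k i)))) = (\<Sum>k\<in>grid d n. g k)"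
  using sum.reindex_bij_betw[OF bij_betw_grid_update[OF assms]] .

lemma power2_add_le_twice_sum_squares: "((p::real) + q)^2 \<le> 2 * (p^2 + q^2)"
proof -
  have "0 \<le> (p - q)^2" by simp
  then show ?thesis by (simp add: power2_eq_square algebra_simps)
qed

lemma square_convex_comb:
  assumes "0 \<le> a" "0 \<le> b" "a + b = 1"
  shows "(a * x + b * y)^2 \<le> a * x^2 + b * (y::real)^2"
proof -
  have b: "b = 1 - a" using assms(3) by simp
  have "a * x^2 + b * y^2 - (a * x + b * y)^2 = a * b * (x - y)^2"
    unfolding b by (simp add: power2_eq_square algebra_simps)
  moreover have "0 \<le> a * b * (x - y)^2" using assms by simp
  ultimately show ?thesis by linarith
qed

lemma FTCS_square_le:
  assumes r: "0 \<le> r" "2 * real d * r \<le> 1"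
  shows "(FTCS d n r v k)^2 \<le> (1 - 2 * real d * r) * (v k)^2
     + r * (\<Sum>i<d. (v (k(i := (k i + 1) mod n)))^2 + (v (k(i := (k i + n - 1) mod n)))^2)"
proof (cases "d = 0")
  case True
  then show ?thesis by (simp add: FTCS_def)
next
  case False
  define T where "T = (\<Sum>i<d. v (k(i := (k i + 1) mod n)) + v (k(i := (k i + n - 1) mod n)))"
  define Q where "Q = (\<Sum>i<d. (v (k(i := (k i + 1) mod n)))^2 + (v (k(i := (k i + n - 1) mod n)))^2)"
  have d: "0 < real d" using False by simp
  have "T^2 \<le> (\<Sum>i<d. (v (k(i := (k i + 1) mod n)) + v (k(i := (k i + n - 1) mod n)))^2) * real d"
    unfolding T_def using sum_squared_le_sum_of_squares[of _ "{..<d}"] by simp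
  also have "\<dots> \<le> (2 * Q) * real d"
    unfolding Q_def sum_distrib_left
    by (intro mult_right_mono sum_mono power2_add_le_twice_sum_squares) simp
  finally have TQ: "T^2 / (2 * real d) \<le> Q"
    using d by (simp add: pos_divide_le_eq algebra_simps)
  have "(FTCS d n r v k)^2 = ((1 - 2 * real d * r) * v k + (2 * real d * r) * (T / (2 * real d)))^2"
    unfolding FTCS_def T_def using d by simp
  also have "\<dots> \<le> (1 - 2 * real d * r) * (v k)^2 + (2 * real d * r) * (T / (2 * real d))^2"
    by (rule square_convex_comb) (use r in auto)
  also have "\<dots> = (1 - 2 * real d * r) * (v k)^2 + r * (T^2 / (2 * real d))"
    using d by (simp add: power2_eq_square field_simps)
  also have "\<dots> \<le> (1 - 2 * real d * r) * (v k)^2 + r * Q"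
    using TQ r by (intro add_left_mono mult_left_mono) auto
  finally show ?thesis unfolding Q_def .
qed

lemma sum_FTCS_square_le:
  assumes r: "0 \<le> r" "2 * real d * r \<le> 1" and n: "0 < n"
  shows "(\<Sum>k\<in>grid d n. (FTCS d n r v k)^2) \<le> (\<Sum>k\<in>grid d n. (v k)^2)"
proof -
  let ?G = "grid d n"
  define N where "N k = (\<Sum>i<d. (v (k(i := (k i + 1) mod n)))^2 + (v (k(i := (k i + n - 1) mod n)))^2)"
    for k
  have "(\<Sum>k\<in>?G. N k) = (\<Sum>i<d. \<Sum>k\<in>?G. (v (k(i := (k i + 1) mod n)))^2 + (v (k(i := (k i + n - 1) mod n)))^2)"
    unfolding N_def by (rule sum.swap)
  also have "\<dots> = (\<Sum>i<d. 2 * (\<Sum>k\<in>?G. (v k)^2))"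
  proof (rule sum.cong)
    fix i assume "i \<in> {..<d}"
    then show "(\<Sum>k\<in>?G. (v (k(i := (k i + 1) mod n)))^2 + (v (k(i := (k i + n - 1) mod n)))^2)
      = 2 * (\<Sum>k\<in>?G. (v k)^2)"
      using sum_grid_update[OF bij_betw_mod_succ[OF n], of i d "\<lambda>k. (v k)^2"]
        sum_grid_update[OF bij_betw_mod_pred[OF n], of i d "\<lambda>k. (v k)^2"]
      by (simp add: sum.distrib)
  qed simp
  finally have neighbours: "(\<Sum>k\<in>?G. N k) = 2 * real d * (\<Sum>k\<in>?G. (v k)^2)"
    by simp
  have "(\<Sum>k\<in>?G. (FTCS d n r v k)^2) \<le> (\<Sum>k\<in>?G. (1 - 2 * real d * r) * (v k)^2 + r * N k)"
    unfolding N_def by (rule sum_mono) (rule FTCS_square_le[OF r])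
  also have "\<dots> = (1 - 2 * real d * r) * (\<Sum>k\<in>?G. (v k)^2) + r * (\<Sum>k\<in>?G. N k)"
    by (simp add: sum.distrib sum_distrib_left)
  also have "\<dots> = (\<Sum>k\<in>?G. (v k)^2)"
    unfolding neighbours by (simp add: algebra_simps)
  finally show ?thesis .
qed

lemma L2_set_FTCS_le:
  assumes "0 \<le> r" "2 * real d * r \<le> 1" "0 < n"
  shows "L2_set (FTCS d n r v) (grid d n) \<le> L2_set v (grid d n)"
  unfolding L2_set_def by (rule real_sqrt_le_mono) (rule sum_FTCS_square_le[OF assms])

lemma FTCS_const:
  assumes k: "k \<in> grid d n" and n: "0 < n" and v: "\<And>k'. k' \<in> grid d n \<Longrightarrow> v k' = c"
  shows "FTCS d n r v k = c"
proof -
  have "(\<Sum>i<d. v (k(i := (k i + 1) mod n)) + v (k(i := (k i + n - 1) mod n))) = (\<Sum>i<d. 2 * c)"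
    using k n by (intro sum.cong) (simp_all add: v fun_upd_in_grid)
  then show ?thesis unfolding FTCS_def using v[OF k] by (simp add: algebra_simps)
qed

lemma L2_set_diff_le: "L2_set (\<lambda>i. f i - g i) A \<le> L2_set f A + L2_set g A"
proof -
  have "L2_set (\<lambda>i. - g i) A = L2_set g A" by (simp add: L2_set_def)
  then show ?thesis using L2_set_triangle_ineq[of f "\<lambda>i. - g i" A] by simp
qed

lemma L2_set_shift_le: "L2_set (\<lambda>j. if 0 < j then f (j - 1) else 0) {..<m} \<le> L2_set f {..<(m::nat)}"
proof (cases m)
  case (Suc m')
  have "L2_set (\<lambda>j. if 0 < j then f (j - 1) else 0) {..<Suc m'} = L2_set f {..<m'}"
    unfolding L2_set_def sum.lessThan_Suc_shift by simp
  also have "\<dots> \<le> L2_set f {..<Suc m'}"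
    unfolding L2_set_def by simp
  finally show ?thesis using Suc by simp
qed simp

lemma vnorm_eq_L2_set: "vnorm S x = L2_set x S"
  by (simp add: vnorm_def L2_set_def)

lemma vnorm_nonneg: "0 \<le> vnorm S x"
  by (simp add: vnorm_eq_L2_set)

lemma vnorm_ratio_le:
  assumes "vnorm S y \<le> K * vnorm S x" "0 \<le> K"
  shows "vnorm S y / vnorm S x \<le> K"
proof (cases "vnorm S x = 0")
  case False
  then have "0 < vnorm S x" by (simp add: vnorm_eq_L2_set less_le)
  then show ?thesis using assms by (simp add: pos_divide_le_eq)
qed (use assms in simp)

lemma opnorm_le:
  assumes bound: "\<And>x. x \<in> vecs S \<Longrightarrow> vnorm S (T x) \<le> K * vnorm S x"
    and "0 \<le> K" "S \<noteq> {}"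
  shows "opnorm S T \<le> K"
  unfolding opnorm_def
proof (rule cSup_least)
  obtain p where "p \<in> S" using \<open>S \<noteq> {}\<close> by blast
  then have "(\<lambda>q. if q = p then 1 else 0) \<in> {x \<in> vecs S. x \<noteq> (\<lambda>_. 0)}"
    by (auto simp: vecs_def fun_eq_iff)
  then show "(\<lambda>x. vnorm S (T x) / vnorm S x) ` {x \<in> vecs S. x \<noteq> (\<lambda>_. 0)} \<noteq> {}" by blast
next
  fix t assume "t \<in> (\<lambda>x. vnorm S (T x) / vnorm S x) ` {x \<in> vecs S. x \<noteq> (\<lambda>_. 0)}"
  then obtain x where x: "x \<in> vecs S" and t: "t = vnorm S (T x) / vnorm S x" by blast
  show "t \<le> K"
    unfolding t using bound[OF x] \<open>0 \<le> K\<close> by (rule vnorm_ratio_le)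
qed

lemma le_opnorm:
  assumes bound: "\<And>x. x \<in> vecs S \<Longrightarrow> vnorm S (T x) \<le> K * vnorm S x" and "0 \<le> K"
    and x: "x \<in> vecs S" "0 < vnorm S x" and c: "c * vnorm S x \<le> vnorm S (T x)"
  shows "c \<le> opnorm S T"
proof -
  let ?ratios = "(\<lambda>x. vnorm S (T x) / vnorm S x) ` {x \<in> vecs S. x \<noteq> (\<lambda>_. 0)}"
  have "x \<noteq> (\<lambda>_. 0)" using x by (auto simp: vnorm_def)
  then have "vnorm S (T x) / vnorm S x \<in> ?ratios" using x by blast
  moreover have "bdd_above ?ratios"
    using bound vnorm_ratio_le \<open>0 \<le> K\<close> by (intro bdd_aboveI[where M = K]) blast
  ultimately have "vnorm S (T x) / vnorm S x \<le> opnorm S T"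
    unfolding opnorm_def by (rule cSup_upper)
  moreover have "c \<le> vnorm S (T x) / vnorm S x"
    using x c by (simp add: pos_le_divide_eq)
  ultimately show ?thesis by linarith
qed

lemma blockidx_nonempty: "0 < m \<Longrightarrow> 0 < n \<Longrightarrow> blockidx m d n \<noteq> {}"
  using zero_in_grid[of n d] by (auto simp: blockidx_def)

lemma vnorm_blockidx: "vnorm (blockidx m d n) x = L2_set (\<lambda>j. L2_set (\<lambda>k. x (j, k)) (grid d n)) {..<m}"
  by (simp add: vnorm_def L2_set_def blockidx_def sum.cartesian_product sum_nonneg)

lemma vnorm_blockA_le:
  assumes r: "0 \<le> r" "2 * real d * r \<le> 1" and n: "0 < n"
  shows "vnorm (blockidx m d n) (blockA d n r x) \<le> 2 * vnorm (blockidx m d n) x"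
proof -
  let ?G = "grid d n"
  define X where "X = (\<lambda>j. L2_set (\<lambda>k. x (j, k)) ?G)"
  define X' where "X' = (\<lambda>j. if 0 < j then X (j - 1) else 0)"
  have block: "L2_set (\<lambda>k. blockA d n r x (j, k)) ?G \<le> X j + X' j" for j
  proof -
    have "L2_set (\<lambda>k. blockA d n r x (j, k)) ?G
        \<le> X j + L2_set (\<lambda>k. if 0 < j then FTCS d n r (\<lambda>k. x (j - 1, k)) k else 0) ?G"
      unfolding X_def blockA_def fst_conv snd_conv by (rule L2_set_diff_le)
    also have "\<dots> \<le> X j + X' j"
      using L2_set_FTCS_le[OF r n] by (simp add: X'_def X_def L2_set_def)
    finally show ?thesis .
  qed
  have "vnorm (blockidx m d n) (blockA d n r x) \<le> L2_set (\<lambda>j. X j + X' j) {..<m}"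
    unfolding vnorm_blockidx by (rule L2_set_mono) (simp_all add: block)
  also have "\<dots> \<le> L2_set X {..<m} + L2_set X' {..<m}"
    by (rule L2_set_triangle_ineq)
  also have "\<dots> \<le> 2 * L2_set X {..<m}"
    using L2_set_shift_le[of X m] by (simp add: X'_def)
  finally show ?thesis by (simp add: vnorm_blockidx X_def)
qed

lemma opnorm_blockA_le:
  assumes "0 \<le> r" "2 * real d * r \<le> 1" "0 < n" "0 < m"
  shows "opnorm (blockidx m d n) (blockA d n r) \<le> 2"
  using vnorm_blockA_le[OF assms(1-3)] blockidx_nonempty[OF assms(4,3)] by (intro opnorm_le) auto

lemma one_le_opnorm_blockA:
  assumes r: "0 \<le> r" "2 * real d * r \<le> 1" and n: "0 < n" and m: "0 < m"
  shows "1 \<le> opnorm (blockidx m d n) (blockA d n r)"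
proof -
  let ?S = "blockidx m d n"
  define x where "x = restr ?S (\<lambda>p. if fst p = m - 1 then 1 else 0)"
  have last: "(m - 1, \<lambda>_. 0) \<in> ?S" using m zero_in_grid[OF n] by (simp add: blockidx_def)
  have x: "x \<in> vecs ?S" by (simp add: x_def restr_def vecs_def)
  have "x (j - 1, k) = 0" if "0 < j" "j < m" for j k
    using that by (auto simp: x_def restr_def)
  then have "blockA d n r x p = x p" if "p \<in> ?S" for p
    using that by (auto simp: blockA_def blockidx_def FTCS_def)
  then have Ax: "vnorm ?S (blockA d n r x) = vnorm ?S x"
    by (simp add: vnorm_def)
  have "0 < vnorm ?S x"
    using member_le_L2_set[OF _ last, of x] finite_grid last
    by (auto simp: vnorm_eq_L2_set x_def restr_def blockidx_def)
  then show ?thesis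
    using le_opnorm[OF vnorm_blockA_le[OF r n] _ x] Ax by simp
qed

primrec forward_subst ::
    "nat \<Rightarrow> nat \<Rightarrow> real \<Rightarrow> (nat \<times> (nat \<Rightarrow> nat) \<Rightarrow> real) \<Rightarrow> nat \<Rightarrow> (nat \<Rightarrow> nat) \<Rightarrow> real" where
  "forward_subst d n r y 0 = restr (grid d n) (\<lambda>k. y (0, k))"
| "forward_subst d n r y (Suc j) =
     restr (grid d n) (\<lambda>k. y (Suc j, k) + FTCS d n r (forward_subst d n r y j) k)"

definition blockA_solve ::
    "nat \<Rightarrow> nat \<Rightarrow> nat \<Rightarrow> real \<Rightarrow> (nat \<times> (nat \<Rightarrow> nat) \<Rightarrow> real) \<Rightarrow> nat \<times> (nat \<Rightarrow> nat) \<Rightarrow> real" where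
  "blockA_solve m d n r y = restr (blockidx m d n) (\<lambda>p. forward_subst d n r y (fst p) (snd p))"

lemma blockA_solve_in_vecs: "blockA_solve m d n r y \<in> vecs (blockidx m d n)"
  by (simp add: blockA_solve_def restr_def vecs_def)

lemma blockA_solve_block: "j < m \<Longrightarrow> blockA_solve m d n r y (j, k) = forward_subst d n r y j k"
  by (cases j) (simp_all add: blockA_solve_def restr_def blockidx_def)

lemma restr_vecs: "y \<in> vecs S \<Longrightarrow> restr S y = y"
  by (auto simp: restr_def vecs_def)

lemma blockA_blockA_solve:
  "restr (blockidx m d n) (blockA d n r (blockA_solve m d n r y)) = restr (blockidx m d n) y"
proof
  fix p
  show "restr (blockidx m d n) (blockA d n r (blockA_solve m d n r y)) p = restr (blockidx m d n) y p"
  proof (cases "p \<in> blockidx m d n")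
    case True
    then obtain j k where p: "p = (j, k)" "j < m" "k \<in> grid d n"
      by (auto simp: blockidx_def)
    then show ?thesis
      by (cases j) (simp_all add: blockA_def blockA_solve_block restr_def)
  qed (simp add: restr_def)
qed

lemma blockA_eq_imp_eq:
  assumes x: "x \<in> vecs (blockidx m d n)" and x': "x' \<in> vecs (blockidx m d n)"
    and eq: "restr (blockidx m d n) (blockA d n r x) = restr (blockidx m d n) (blockA d n r x')"
  shows "x = x'"
proof -
  have "x (j, k) = x' (j, k)" for j k
  proof (induction j arbitrary: k rule: less_induct)
    case (less j)
    show ?case
    proof (cases "(j, k) \<in> blockidx m d n")
      case True
      have "blockA d n r x (j, k) = blockA d n r x' (j, k)"
        using fun_cong[OF eq, of "(j, k)"] True by (simp add: restr_def)
      moreover have "0 < j \<Longrightarrow> (\<lambda>k. x (j - 1, k)) = (\<lambda>k. x' (j - 1, k))"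
        using less by simp
      ultimately show ?thesis by (auto simp: blockA_def split: if_splits)
    qed (use x x' in \<open>simp add: vecs_def\<close>)
  qed
  then show ?thesis by (simp add: fun_eq_iff)
qed

lemma invertible_on_blockA: "invertible_on (blockidx m d n) (blockA d n r)"
  unfolding invertible_on_def
  using blockA_solve_in_vecs blockA_blockA_solve restr_vecs blockA_eq_imp_eq
  by metis

lemma inv_on_blockA: "inv_on (blockidx m d n) (blockA d n r) y = blockA_solve m d n r y"
  unfolding inv_on_def
proof (rule the_equality)
  show "blockA_solve m d n r y \<in> vecs (blockidx m d n) \<and>
      restr (blockidx m d n) (blockA d n r (blockA_solve m d n r y)) = restr (blockidx m d n) y"
    using blockA_solve_in_vecs blockA_blockA_solve by blast
qed (metis blockA_eq_imp_eq blockA_solve_in_vecs blockA_blockA_solve)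

lemma L2_set_forward_subst_le:
  assumes r: "0 \<le> r" "2 * real d * r \<le> 1" and n: "0 < n"
  shows "L2_set (forward_subst d n r y j) (grid d n) \<le> (\<Sum>i\<le>j. L2_set (\<lambda>k. y (i, k)) (grid d n))"
proof (induction j)
  case 0
  show ?case by (simp add: L2_set_def restr_def)
next
  case (Suc j)
  let ?G = "grid d n"
  have "L2_set (forward_subst d n r y (Suc j)) ?G
      = L2_set (\<lambda>k. y (Suc j, k) + FTCS d n r (forward_subst d n r y j) k) ?G"
    by (rule L2_set_cong) (simp_all add: restr_def)
  also have "\<dots> \<le> L2_set (\<lambda>k. y (Suc j, k)) ?G + L2_set (forward_subst d n r y j) ?G"
    using L2_set_triangle_ineq[of "\<lambda>k. y (Suc j, k)" "FTCS d n r (forward_subst d n r y j)" ?G]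
      L2_set_FTCS_le[OF r n, of "forward_subst d n r y j"] by linarith
  also have "\<dots> \<le> (\<Sum>i\<le>Suc j. L2_set (\<lambda>k. y (i, k)) ?G)"
    using Suc by simp
  finally show ?case .
qed

lemma power2_vnorm_blockidx:
  "(vnorm (blockidx m d n) x)^2 = (\<Sum>j<m. \<Sum>k\<in>grid d n. (x (j, k))^2)"
  by (simp add: vnorm_def blockidx_def sum.cartesian_product sum_nonneg)

lemma vnorm_blockA_solve_le:
  assumes r: "0 \<le> r" "2 * real d * r \<le> 1" and n: "0 < n"
  shows "vnorm (blockidx m d n) (blockA_solve m d n r y) \<le> real m * vnorm (blockidx m d n) y"
proof -
  let ?G = "grid d n"
  define Y where "Y = (\<lambda>i. L2_set (\<lambda>k. y (i, k)) ?G)"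
  define W where "W = (\<Sum>i<m. Y i)"
  have "W = (\<Sum>i<m. \<bar>Y i\<bar> * \<bar>1\<bar>)" by (simp add: W_def Y_def)
  also have "\<dots> \<le> L2_set Y {..<m} * L2_set (\<lambda>_. 1) {..<m}"
    by (rule L2_set_mult_ineq)
  finally have W_le: "W \<le> sqrt (real m) * vnorm (blockidx m d n) y"
    by (simp add: L2_set_constant vnorm_blockidx Y_def mult.commute)
  have "vnorm (blockidx m d n) (blockA_solve m d n r y) = L2_set (\<lambda>j. L2_set (forward_subst d n r y j) ?G) {..<m}"
    unfolding vnorm_blockidx by (rule L2_set_cong) (simp_all add: blockA_solve_block)
  also have "\<dots> \<le> L2_set (\<lambda>_. W) {..<m}"
  proof (rule L2_set_mono)
    fix j assume "j \<in> {..<m}"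
    then have "(\<Sum>i\<le>j. Y i) \<le> W"
      unfolding W_def Y_def by (intro sum_mono2) auto
    then show "L2_set (forward_subst d n r y j) ?G \<le> W"
      using L2_set_forward_subst_le[OF r n, of y j] by (simp add: Y_def)
  qed simp
  also have "\<dots> = sqrt (real m) * W"
    by (simp add: L2_set_constant W_def Y_def sum_nonneg)
  also have "\<dots> \<le> sqrt (real m) * (sqrt (real m) * vnorm (blockidx m d n) y)"
    using W_le by (simp add: mult_left_mono)
  also have "\<dots> = real m * vnorm (blockidx m d n) y"
    by (simp flip: mult.assoc)
  finally show ?thesis .
qed

lemma forward_subst_ones:
  assumes n: "0 < n" and y: "\<And>p. p \<in> blockidx m d n \<Longrightarrow> y p = 1"
    and j: "j < m" and k: "k \<in> grid d n"
  shows "forward_subst d n r y j k = real j + 1"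
  using j k
proof (induction j arbitrary: k)
  case 0
  then show ?case by (simp add: restr_def y blockidx_def)
next
  case (Suc j)
  have "FTCS d n r (forward_subst d n r y j) k = real j + 1"
    by (rule FTCS_const[OF Suc.prems(2) n]) (use Suc in auto)
  then show ?case using Suc.prems by (simp add: restr_def y blockidx_def)
qed

lemma cube_div_3_le_sum_squares: "real m ^ 3 / 3 \<le> (\<Sum>j<m. (real j + 1)^2)"
proof (induction m)
  case (Suc m)
  have "real (Suc m) ^ 3 / 3 = real m ^ 3 / 3 + (real m ^ 2 + real m + 1/3)"
    by (simp add: power3_eq_cube power2_eq_square algebra_simps add_divide_distrib)
  also have "\<dots> \<le> (\<Sum>j<m. (real j + 1)^2) + (real m + 1)^2"
    using Suc by (simp add: power2_eq_square algebra_simps)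
  finally show ?case by simp
qed simp

lemma half_m_le_opnorm_inv_blockA:
  assumes r: "0 \<le> r" "2 * real d * r \<le> 1" and n: "0 < n" and m: "0 < m"
  shows "real m / 2 \<le> opnorm (blockidx m d n) (inv_on (blockidx m d n) (blockA d n r))"
proof -
  let ?S = "blockidx m d n"
  let ?N = "real (card (grid d n))"
  define y where "y = restr ?S (\<lambda>_. 1)"
  have y: "y \<in> vecs ?S" by (simp add: y_def restr_def vecs_def)
  have ones: "y p = 1" if "p \<in> ?S" for p
    using that by (simp add: y_def restr_def)
  have y_sq: "(vnorm ?S y)^2 = real m * ?N"
    unfolding power2_vnorm_blockidx by (simp add: ones blockidx_def)
  have "(real m / 2 * vnorm ?S y)^2 = ?N * (real m ^ 3 / 4)"
    unfolding power_mult_distrib y_sq by (simp add: power2_eq_square power3_eq_cube)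
  also have "\<dots> \<le> ?N * (\<Sum>j<m. (real j + 1)^2)"
  proof (rule mult_left_mono)
    show "real m ^ 3 / 4 \<le> (\<Sum>j<m. (real j + 1)^2)"
      using cube_div_3_le_sum_squares[of m] zero_le_power[of "real m" 3] by linarith
  qed simp
  also have "\<dots> = (vnorm ?S (blockA_solve m d n r y))^2"
    unfolding power2_vnorm_blockidx
    by (simp add: blockA_solve_block forward_subst_ones[OF n ones] sum_distrib_left mult.commute)
  finally have "(real m / 2 * vnorm ?S y)^2 \<le> (vnorm ?S (blockA_solve m d n r y))^2" .
  then have lower: "real m / 2 * vnorm ?S y \<le> vnorm ?S (inv_on ?S (blockA d n r) y)"
    unfolding inv_on_blockA by (rule power2_le_imp_le) (rule vnorm_nonneg)
  have y_pos: "0 < vnorm ?S y"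
  proof -
    have "0 < card (grid d n)" using finite_grid zero_in_grid[OF n] card_gt_0_iff by blast
    then have "0 < (vnorm ?S y)^2" unfolding y_sq using m by simp
    then show ?thesis using vnorm_nonneg[of ?S y] by (simp add: less_le)
  qed
  have bound: "vnorm ?S (inv_on ?S (blockA d n r) z) \<le> real m * vnorm ?S z" for z
    unfolding inv_on_blockA by (rule vnorm_blockA_solve_le[OF r n])
  show ?thesis
    by (rule le_opnorm[OF bound _ y y_pos lower]) simp
qed

lemma opnorm_inv_blockA_le:
  assumes "0 \<le> r" "2 * real d * r \<le> 1" "0 < n" "0 < m"
  shows "opnorm (blockidx m d n) (inv_on (blockidx m d n) (blockA d n r)) \<le> real m"
  using vnorm_blockA_solve_le[OF assms(1-3)] blockidx_nonempty[OF assms(4,3)]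
  by (intro opnorm_le) (auto simp: inv_on_blockA)

theorem mainTheorem3:
  shows "\<exists>c C :: real. 0 < c \<and> c \<le> C \<and>
    (\<forall>(d::nat) (n::nat) (m::nat) (r::real).
       1 \<le> d \<longrightarrow> 3 \<le> n \<longrightarrow> 1 \<le> m \<longrightarrow> 0 < r \<longrightarrow> r \<le> 1 / (2 * real d) \<longrightarrow>
       invertible_on (blockidx m d n) (blockA d n r) \<and>
       c \<le> opnorm (blockidx m d n) (blockA d n r) \<and>
       opnorm (blockidx m d n) (blockA d n r) \<le> C \<and>
       c * real m \<le> opnorm (blockidx m d n) (inv_on (blockidx m d n) (blockA d n r)) \<and>
       opnorm (blockidx m d n) (inv_on (blockidx m d n) (blockA d n r)) \<le> C * real m)"
proof (rule exI[of _ "1/2"], rule exI[of _ 2], intro conjI allI impI)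
  fix d n m :: nat and r :: real
  assume "1 \<le> d" "3 \<le> n" "1 \<le> m" "0 < r" "r \<le> 1 / (2 * real d)"
  then have r: "0 \<le> r" "2 * real d * r \<le> 1" and n: "0 < n" and m: "0 < m"
    by (simp_all add: field_simps)
  show "invertible_on (blockidx m d n) (blockA d n r)"
    by (rule invertible_on_blockA)
  show "1/2 \<le> opnorm (blockidx m d n) (blockA d n r)"
    using one_le_opnorm_blockA[OF r n m] by simp
  show "opnorm (blockidx m d n) (blockA d n r) \<le> 2"
    by (rule opnorm_blockA_le[OF r n m])
  show "1/2 * real m \<le> opnorm (blockidx m d n) (inv_on (blockidx m d n) (blockA d n r))"
    using half_m_le_opnorm_inv_blockA[OF r n m] by simp
  show "opnorm (blockidx m d n) (inv_on (blockidx m d n) (blockA d n r)) \<le> 2 * real m"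
    using opnorm_inv_blockA_le[OF r n m] by simp
qed simp_all

end
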